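(* Let $\theta$ be supertransversal and cancellation-free, and let $\tau$ be a ridge (face of dimension $n_0-2$) of the breakpoint complex $\mathcal B_\theta$. Then the number of facets of $\mathcal B_\theta$ containing $\tau$ is either $3$ or $4$.
   Context: Networks: $\theta=(W^{(\ell)},b^{(\ell)})_{\ell\in[L+1]}$, $a^{(0)}=x$, $z^{(\ell)}=W^{(\ell)}a^{(\ell-1)}+b^{(\ell)}$, $a^{(\ell)}=\max(0,z^{(\ell)})$, $f_\theta=W^{(L+1)}a^{(L)}+b^{(L+1)}$ on $\mathbb R^{n_0}$. Canonical complex: $\mathcal C_{\theta,0}=\{\mathbb R^{n_0}\}$; for $R\in\mathcal C_{\theta,\ell-1}$, $H_R(\ell,j)=\{x\in\operatorname{aff}(R):z^{(\ell)}_j|_R(x)=0\}$, half-spaces $H^\pm_R(\ell,j)$, $H^0_R=H_R$; $\mathcal C_{\theta,\ell}=\{R\cap\bigcap_jH^{s_j}_R(\ell,j)\}$; $\mathcal C_\theta=\mathcal C_{\theta,L}$. Bent hyperplane $B_{j,\ell}(\theta)=\bigcup\{\{x\in R:z^{(\ell)}_j|_R(x)=0\}:R\in\mathcal C_{\theta,\ell-1},z^{(\ell)}_j|_R\text{ non-constant}\}$. A breakpoint of $f_\theta$ is a point with no open neighborhood on which $f_\theta$ is affine. The breakpoint complex is $\mathcal B_\theta=\{P\in\mathcal C_\theta: P\subseteq\text{set of breakpoints of }f_\theta\}$. Tropical weight of a facet $\sigma=P\cap Q$ of $\mathcal C_\theta$: $c_\theta(\sigma)=(A_P-A_Q)e_{P/\sigma}$,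 where $A_P,A_Q$ are the linear parts of $f_\theta$ on $P,Q$ and $e_{P/\sigma}$ is the unit normal of $\sigma$ pointing into $P$. $\theta$ is supertransversal if each codimension-$k$ face of $\mathcal C_\theta$ lies in exactly $k$ bent hyperplanes; cancellation-free if for every facet $\sigma$ of $\mathcal C_\theta$, $c_\theta(\sigma)=0$ iff some hidden layer $k$ has all its preactivations negative on $\operatorname{relint}(\sigma)$. *)

theory Defs
  imports "HOL-Analysis.Analysis"
begin

text \<open>A fully connected ReLU network with input space real^'n (so n_0 = CARD('n)).
  depth = L (number of hidden layers); width l = n_l for l = 1..L+1;
  W1 j = j-th row of the first weight matrix W^(1);
  Wt l j i = entry (j,i) of W^(l) for l >= 2; bias l j = b^(l)_j.\<close>
record ('n::finite) relu_net =
  depth :: nat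
  width :: "nat \<Rightarrow> nat"
  W1 :: "nat \<Rightarrow> real^'n"
  Wt :: "nat \<Rightarrow> nat \<Rightarrow> nat \<Rightarrow> real"
  bias :: "nat \<Rightarrow> nat \<Rightarrow> real"

definition valid_net :: "('n::finite) relu_net \<Rightarrow> bool" where
  "valid_net N \<longleftrightarrow> (\<forall>l\<in>{1..Suc (depth N)}. 0 < width N l)"

text \<open>Preactivation z^(l)_j(x) for l >= 1; layer depth+1 is the output layer.\<close>
fun pre :: "('n::finite) relu_net \<Rightarrow> nat \<Rightarrow> nat \<Rightarrow> real^'n \<Rightarrow> real" where
  "pre N 0 j x = 0"
| "pre N (Suc 0) j x = W1 N j \<bullet> x + bias N 1 j"
| "pre N (Suc (Suc l)) j x =
     (\<Sum>i<width N (Suc l). Wt N (Suc (Suc l)) j i * max 0 (pre N (Suc l) i x))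
     + bias N (Suc (Suc l)) j"

definition netf :: "('n::finite) relu_net \<Rightarrow> real^'n \<Rightarrow> nat \<Rightarrow> real" where
  "netf N x k = pre N (Suc (depth N)) k x"

definition nout :: "('n::finite) relu_net \<Rightarrow> nat" where
  "nout N = width N (Suc (depth N))"

definition sgn_cond :: "int \<Rightarrow> real \<Rightarrow> bool" where
  "sgn_cond s t = (if 0 < s then 0 \<le> t else if s < 0 then t \<le> 0 else t = 0)"

text \<open>C_{theta,l}. Since R \<subseteq> aff R and the affine extension agrees with z on R,
  R \<inter> H^s_R(l,j) = {x \<in> R. z^(l)_j(x) satisfies the sign condition}.\<close>
fun cells :: "('n::finite) relu_net \<Rightarrow> nat \<Rightarrow> (real^'n) set set" where
  "cells N 0 = {UNIV}"
| "cells N (Suc l) = {P. P \<noteq> {} \<and> (\<exists>R\<in>cells N l. \<exists>s::nat \<Rightarrow> int.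
        P = {x\<in>R. \<forall>j<width N (Suc l). sgn_cond (s j) (pre N (Suc l) j x)})}"

definition canonical :: "('n::finite) relu_net \<Rightarrow> (real^'n) set set" where
  "canonical N = cells N (depth N)"

definition bent :: "('n::finite) relu_net \<Rightarrow> nat \<Rightarrow> nat \<Rightarrow> (real^'n) set" where
  "bent N l j = \<Union>{{x\<in>R. pre N l j x = 0} | R. R \<in> cells N (l - 1) \<and>
        (\<exists>x\<in>R. \<exists>y\<in>R. pre N l j x \<noteq> pre N l j y)}"

definition affine_on_net :: "('n::finite) relu_net \<Rightarrow> (real^'n) set \<Rightarrow> bool" where
  "affine_on_net N U \<longleftrightarrow> (\<exists>(A::nat \<Rightarrow> real^'n) (c::nat \<Rightarrow> real).
      \<forall>x\<in>U. \<forall>k<nout N. netf N x k = A k \<bullet> x + c k)"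

definition breakpoint :: "('n::finite) relu_net \<Rightarrow> real^'n \<Rightarrow> bool" where
  "breakpoint N x \<longleftrightarrow> \<not> (\<exists>U. open U \<and> x \<in> U \<and> affine_on_net N U)"

definition breakpoint_complex :: "('n::finite) relu_net \<Rightarrow> (real^'n) set set" where
  "breakpoint_complex N = {P\<in>canonical N. P \<subseteq> {x. breakpoint N x}}"

definition supertransversal :: "('n::finite) relu_net \<Rightarrow> bool" where
  "supertransversal N \<longleftrightarrow> (\<forall>F\<in>canonical N.
     card {(l, j). l \<in> {1..depth N} \<and> j < width N l \<and> F \<subseteq> bent N l j}
       = nat (int CARD('n) - aff_dim F))"

definition lin_part :: "('n::finite) relu_net \<Rightarrow> (real^'n) set \<Rightarrow> nat \<Rightarrow> real^'n" where
  "lin_part N P = (SOME A. \<exists>c::nat \<Rightarrow> real.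
      \<forall>x\<in>P. \<forall>k<nout N. netf N x k = A k \<bullet> x + c k)"

definition unit_normal :: "(real^('n::finite)) set \<Rightarrow> (real^'n) set \<Rightarrow> real^'n" where
  "unit_normal P \<sigma> = (SOME e. norm e = 1 \<and> (\<forall>x\<in>\<sigma>. \<forall>y\<in>\<sigma>. e \<bullet> (x - y) = 0)
       \<and> (\<forall>p\<in>P. \<forall>s\<in>\<sigma>. 0 \<le> e \<bullet> (p - s)))"

definition trop_weight :: "('n::finite) relu_net \<Rightarrow> (real^'n) set \<Rightarrow> (real^'n) set \<Rightarrow> (real^'n) set \<Rightarrow> nat \<Rightarrow> real" where
  "trop_weight N P Q \<sigma> = (\<lambda>k. if k < nout N
      then (lin_part N P k - lin_part N Q k) \<bullet> unit_normal P \<sigma> else 0)"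

definition cancellation_free :: "('n::finite) relu_net \<Rightarrow> bool" where
  "cancellation_free N \<longleftrightarrow> (\<forall>\<sigma> P Q.
     \<sigma> \<in> canonical N \<and> aff_dim \<sigma> = int CARD('n) - 1 \<and>
     P \<in> canonical N \<and> Q \<in> canonical N \<and> aff_dim P = int CARD('n) \<and> aff_dim Q = int CARD('n) \<and>
     P \<noteq> Q \<and> \<sigma> = P \<inter> Q \<longrightarrow>
       (trop_weight N P Q \<sigma> = (\<lambda>_. 0) \<longleftrightarrow>
        (\<exists>k\<in>{1..depth N}. \<forall>j<width N k. \<forall>x\<in>rel_interior \<sigma>. pre N k j x < 0)))"

end

theory Submission
  imports Defs
begin

text \<open>Take \<open>p\<close> in the relative interior of the ridge \<open>\<tau>\<close>. By supertransversality exactly two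
  neurons \<open>za\<close>, \<open>zb\<close> bend along \<open>\<tau>\<close>, and every other preactivation has constant sign near
  \<open>p\<close>. So near \<open>p\<close> the cells through \<open>\<tau>\<close> are cut out by the signs of \<open>za\<close> and \<open>zb\<close>
  alone: \<open>za\<close> is linear there and \<open>zb\<close> is linear on either side of \<open>za = 0\<close>, with
  independent normals, so \<open>\<tau>\<close> lies in four chambers and in four facets arranged cyclically
  between them. A facet not consisting of breakpoints has tropical weight zero, so by
  cancellation-freeness some layer is dead along it and \<open>f\<^sub>\<theta>\<close> is constant on both adjacent
  chambers. Two such facets would make three chambers constant, hence also the fourth, whose
  two facets span the space; then \<open>f\<^sub>\<theta>\<close> would be affine near the breakpoint \<open>p\<close>. So at most
  one of the four facets is missing from the breakpoint complex.\<close>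

section \<open>Sign conditions and affine geometry\<close>

lemma sgn_cond_0 [simp]: "sgn_cond s 0"
  by (simp add: sgn_cond_def)

lemma sgn_cond_zero_iff [simp]: "sgn_cond 0 v \<longleftrightarrow> v = 0"
  by (simp add: sgn_cond_def)

lemma sgn_cond_sgn [simp]: "sgn_cond (sgn s) v \<longleftrightarrow> sgn_cond s v"
  by (simp add: sgn_cond_def sgn_if)

lemma sgn_cond_unit_iff: "u \<in> {1, -1} \<Longrightarrow> sgn_cond u v \<longleftrightarrow> 0 \<le> of_int u * v"
  by (auto simp: sgn_cond_def)

lemma sgn_cond_same_sgn: "sgn v = sgn w \<Longrightarrow> sgn_cond s v \<Longrightarrow> sgn_cond s w"
  by (auto simp: sgn_cond_def sgn_if split: if_splits)

lemma sgn_cond_transfer: "v \<noteq> 0 \<Longrightarrow> sgn_cond s v \<Longrightarrow> sgn_cond s' v \<Longrightarrow> sgn_cond s w \<Longrightarrow> sgn_cond s' w"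
  by (auto simp: sgn_cond_def split: if_splits)

lemma sgn_cond_convex_comb:
  "sgn_cond s v \<Longrightarrow> sgn_cond s w \<Longrightarrow> 0 \<le> \<mu> \<Longrightarrow> \<mu> \<le> 1 \<Longrightarrow> sgn_cond s ((1 - \<mu>) * v + \<mu> * w)"
  unfolding sgn_cond_def
  by (auto intro!: add_nonneg_nonneg add_nonpos_nonpos mult_nonneg_nonneg mult_nonneg_nonpos split: if_splits)

lemma sgn_cond_of_sgn: "sgn v = of_int s \<Longrightarrow> sgn_cond s v"
  by (auto simp: sgn_cond_def sgn_if split: if_splits)

lemma sgn_cond_mutual_imp_eq:
  assumes "s \<in> {-1, 0, 1}" "s' \<in> {-1, 0, 1}" "sgn v = of_int s" "sgn w = of_int s'"
    and "sgn_cond s' v" "sgn_cond s w"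
  shows "s = s'"
  using assms by (auto simp: sgn_cond_def sgn_if split: if_splits)

definition affine_fun_on :: "('a::real_inner) set \<Rightarrow> ('a \<Rightarrow> real) \<Rightarrow> bool" where
  "affine_fun_on S f \<longleftrightarrow> (\<exists>a c. \<forall>x\<in>S. f x = a \<bullet> x + c)"

lemma affine_fun_on_const: "affine_fun_on S (\<lambda>x. c)"
  unfolding affine_fun_on_def by (rule exI[of _ 0]) auto

lemma affine_fun_on_add:
  assumes "affine_fun_on S f" "affine_fun_on S g"
  shows "affine_fun_on S (\<lambda>x. f x + g x)"
proof -
  obtain a c b d where "\<forall>x\<in>S. f x = a \<bullet> x + c" "\<forall>x\<in>S. g x = b \<bullet> x + d"
    using assms unfolding affine_fun_on_def by blast
  then show ?thesis
    unfolding affine_fun_on_def by (intro exI[of _ "a + b"] exI[of _ "c + d"]) (simp add: inner_add_left)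
qed

lemma affine_fun_on_scale:
  assumes "affine_fun_on S f"
  shows "affine_fun_on S (\<lambda>x. k * f x)"
proof -
  obtain a c where "\<forall>x\<in>S. f x = a \<bullet> x + c"
    using assms unfolding affine_fun_on_def by blast
  then show ?thesis
    unfolding affine_fun_on_def by (intro exI[of _ "k *\<^sub>R a"] exI[of _ "k * c"]) (simp add: algebra_simps)
qed

lemma affine_fun_on_sum:
  "finite I \<Longrightarrow> (\<And>i. i \<in> I \<Longrightarrow> affine_fun_on S (f i)) \<Longrightarrow> affine_fun_on S (\<lambda>x. \<Sum>i\<in>I. f i x)"
  by (induction I rule: finite_induct) (simp_all add: affine_fun_on_const affine_fun_on_add)

lemma affine_fun_on_max_0:
  assumes "affine_fun_on S f" "\<forall>x\<in>S. sgn_cond s (f x)"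
  shows "affine_fun_on S (\<lambda>x. max 0 (f x))"
proof (cases "0 < s")
  case True
  then have "\<forall>x\<in>S. max 0 (f x) = f x" using assms(2) by (simp add: sgn_cond_def)
  then show ?thesis using assms(1) unfolding affine_fun_on_def by simp
next
  case False
  then have "\<forall>x\<in>S. max 0 (f x) = 0" using assms(2) by (auto simp: sgn_cond_def split: if_splits)
  then show ?thesis using affine_fun_on_const[of S 0] unfolding affine_fun_on_def by simp
qed

lemma affine_fun_on_vanishing:
  assumes "affine_fun_on S f" "p \<in> S" "f p = 0"
  shows "\<exists>g. \<forall>x\<in>S. f x = g \<bullet> (x - p)"
proof -
  obtain g c where gc: "\<forall>x\<in>S. f x = g \<bullet> x + c" using assms(1) unfolding affine_fun_on_def by blast
  then have "c = - (g \<bullet> p)" using assms(2,3) by force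
  then show ?thesis using gc by (auto simp: inner_diff_right)
qed

lemma open_contains_ray_point:
  fixes p v :: "'a::real_normed_vector"
  assumes "open U" "p \<in> U"
  shows "\<exists>\<epsilon>>0. p + \<epsilon> *\<^sub>R v \<in> U"
proof -
  have "((\<lambda>\<epsilon>::real. p + \<epsilon> *\<^sub>R v) \<longlongrightarrow> p + 0 *\<^sub>R v) (at_right 0)"
    by (intro tendsto_intros)
  then have "\<forall>\<^sub>F \<epsilon> in at_right 0. p + \<epsilon> *\<^sub>R v \<in> U"
    using assms by (simp add: topological_tendstoD)
  then have "\<forall>\<^sub>F \<epsilon> in at_right 0. 0 < \<epsilon> \<and> p + \<epsilon> *\<^sub>R v \<in> U"
    by (intro eventually_conj eventually_at_right_less)
  then have "\<exists>\<epsilon>. 0 < \<epsilon> \<and> p + \<epsilon> *\<^sub>R v \<in> U"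
    by (rule eventually_happens'[rotated]) simp
  then show ?thesis by blast
qed

lemma linear_part_unique_on_open:
  fixes a b :: "'a::euclidean_space"
  assumes "open U" "U \<noteq> {}" "\<forall>x\<in>U. a \<bullet> x + c = b \<bullet> x + d"
  shows "a = b"
proof (rule ccontr)
  assume "a \<noteq> b"
  have "U \<subseteq> {x. (a - b) \<bullet> x = d - c}"
    using assms(3) by (auto simp: inner_diff_left algebra_simps)
  then have "aff_dim U \<le> aff_dim {x. (a - b) \<bullet> x = d - c}"
    by (rule aff_dim_subset)
  with \<open>a \<noteq> b\<close> show False
    using aff_dim_open[OF assms(1,2)] by simp
qed

lemma affine_hull_in_hyperplane_if_locally:
  fixes P :: "'a::euclidean_space set"
  assumes "convex P" "p \<in> P" "0 < r" "P \<inter> ball p r \<subseteq> {x. a \<bullet> x = c}"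
  shows "affine hull P \<subseteq> {x. a \<bullet> x = c}"
proof -
  have "affine hull (P \<inter> ball p r) = affine hull P"
    using assms(1-3) by (intro affine_hull_convex_Int_open) auto
  moreover have "affine hull (P \<inter> ball p r) \<subseteq> {x. a \<bullet> x = c}"
    using assms(4) by (intro hull_minimal affine_hyperplane)
  ultimately show ?thesis by simp
qed

lemma aff_dim_le_if_locally_in_hyperplane:
  fixes P :: "'a::euclidean_space set"
  assumes "convex P" "p \<in> P" "0 < r" "P \<inter> ball p r \<subseteq> {x. a \<bullet> x = c}" "a \<noteq> 0"
  shows "aff_dim P \<le> int DIM('a) - 1"
proof -
  have "aff_dim (affine hull P) \<le> aff_dim {x. a \<bullet> x = c}"
    using affine_hull_in_hyperplane_if_locally[OF assms(1-4)] by (rule aff_dim_subset)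
  then show ?thesis using assms(5) DIM_positive[where 'a='a] by simp
qed

lemma affine_zero_near_point_imp_zero:
  fixes P :: "'a::euclidean_space set"
  assumes "convex P" "p \<in> P" "0 < r" "\<forall>x\<in>P. f x = a \<bullet> x + c"
    and "\<forall>x\<in>P \<inter> ball p r. f x = 0" "y \<in> P"
  shows "f y = 0"
proof -
  have "P \<inter> ball p r \<subseteq> {x. a \<bullet> x = - c}"
    using assms(4,5) by force
  then have "affine hull P \<subseteq> {x. a \<bullet> x = - c}"
    using affine_hull_in_hyperplane_if_locally[OF assms(1-3)] by blast
  then show ?thesis
    using assms(4,6) hull_subset[of P affine] by force
qed

lemma affine_sgn_cond_zero_if_zero_at_rel_interior:
  fixes S :: "'a::euclidean_space set"
  assumes "convex S" "p \<in> rel_interior S" "\<forall>x\<in>S. f x = a \<bullet> x + c"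
    and "\<forall>x\<in>S. sgn_cond s (f x)" "f p = 0" "y \<in> S"
  shows "f y = 0"
proof -
  have "S \<noteq> {}" using assms(6) by blast
  then obtain e where e: "1 < e" "(1 - e) *\<^sub>R y + e *\<^sub>R p \<in> S"
    using assms(1,2,6) convex_rel_interior_iff by blast
  have "p \<in> S" using assms(2) rel_interior_subset by blast
  have "f ((1 - e) *\<^sub>R y + e *\<^sub>R p) = (1 - e) * f y + e * f p"
    using assms(3) e(2) \<open>p \<in> S\<close> assms(6) by (simp add: inner_add_right algebra_simps)
  then have "f ((1 - e) *\<^sub>R y + e *\<^sub>R p) = (1 - e) * f y"
    using assms(5) by simp
  moreover have "sgn_cond s (f y)" "sgn_cond s (f ((1 - e) *\<^sub>R y + e *\<^sub>R p))"
    using assms(4,6) e(2) by auto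
  ultimately show ?thesis
    using e(1) by (auto simp: sgn_cond_def mult_le_0_iff zero_le_mult_iff split: if_splits)
qed

lemma convex_open_meets_interior:
  fixes C :: "'a::euclidean_space set"
  assumes "convex C" "interior C \<noteq> {}" "x \<in> C" "open U" "x \<in> U"
  shows "U \<inter> interior C \<noteq> {}"
proof -
  have "x \<in> closure (interior C)"
    using convex_closure_interior[OF assms(1,2)] assms(3) closure_subset by blast
  then show ?thesis
    using assms(4,5) open_Int_closure_eq_empty by blast
qed

lemma interior_nonempty_if_full_aff_dim:
  fixes C :: "'a::euclidean_space set"
  assumes "convex C" "C \<noteq> {}" "aff_dim C = DIM('a)"
  shows "interior C \<noteq> {}"
  using assms interior_rel_interior rel_interior_eq_empty by metis

lemma aff_dim_ball_Int_hyperplane_ge: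
  fixes a p :: "'a::euclidean_space"
  assumes "0 < r"
  shows "int DIM('a) - 1 \<le> aff_dim (ball p r \<inter> {x. a \<bullet> (x - p) = 0})"
proof (cases "a = 0")
  case True
  then show ?thesis using assms by (simp add: aff_dim_open)
next
  case False
  have "ball p r \<inter> {x. a \<bullet> (x - p) = 0} = {x. a \<bullet> x = a \<bullet> p} \<inter> ball p r"
    by (auto simp: inner_diff_right)
  moreover have "affine hull ({x. a \<bullet> x = a \<bullet> p} \<inter> ball p r) = affine hull {x. a \<bullet> x = a \<bullet> p}"
    using assms by (intro affine_hull_convex_Int_open) (auto simp: convex_hyperplane)
  then have "aff_dim ({x. a \<bullet> x = a \<bullet> p} \<inter> ball p r) = aff_dim {x. a \<bullet> x = a \<bullet> p}"
    by (metis aff_dim_affine_hull)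
  ultimately show ?thesis
    using False DIM_positive[where 'a='a] by simp
qed

lemma gram_degenerate_common_zeros:
  fixes g h :: "'a::real_inner"
  assumes "(g \<bullet> g) * (h \<bullet> h) = (g \<bullet> h)\<^sup>2"
  shows "\<exists>a. \<forall>x. (g \<bullet> x = 0 \<and> h \<bullet> x = 0) \<longleftrightarrow> a \<bullet> x = 0"
proof (cases "g = 0")
  case True
  then show ?thesis by auto
next
  case False
  define c where "c = (g \<bullet> h) / (g \<bullet> g)"
  have "(h - c *\<^sub>R g) \<bullet> (h - c *\<^sub>R g) = ((g \<bullet> g) * (h \<bullet> h) - (g \<bullet> h)\<^sup>2) / (g \<bullet> g)"
    using False unfolding c_def
    by (simp add: inner_diff_left inner_diff_right inner_commute field_simps power2_eq_square)
  then have "h = c *\<^sub>R g" using assms by simp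
  then show ?thesis by (intro exI[of _ g]) auto
qed

lemma gram_nondegenerate_solvable:
  fixes g h :: "'a::real_inner"
  assumes "(g \<bullet> g) * (h \<bullet> h) \<noteq> (g \<bullet> h)\<^sup>2"
  shows "\<exists>v. g \<bullet> v = \<alpha> \<and> h \<bullet> v = \<beta>"
proof -
  define d where "d = (g \<bullet> g) * (h \<bullet> h) - (g \<bullet> h)\<^sup>2"
  define x where "x = (\<alpha> * (h \<bullet> h) - \<beta> * (g \<bullet> h)) / d"
  define y where "y = (\<beta> * (g \<bullet> g) - \<alpha> * (g \<bullet> h)) / d"
  have "d \<noteq> 0" using assms unfolding d_def by simp
  have "x * (g \<bullet> g) + y * (g \<bullet> h) = \<alpha>" "x * (g \<bullet> h) + y * (h \<bullet> h) = \<beta>"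
    using \<open>d \<noteq> 0\<close> unfolding x_def y_def d_def by (simp_all add: divide_simps) algebra+
  then have "g \<bullet> (x *\<^sub>R g + y *\<^sub>R h) = \<alpha> \<and> h \<bullet> (x *\<^sub>R g + y *\<^sub>R h) = \<beta>"
    by (simp add: inner_add_right inner_commute)
  then show ?thesis by blast
qed

lemma linear_form_zero_on_two_half_hyperplanes:
  fixes g h a :: "'a::real_inner"
  assumes gram: "(g \<bullet> g) * (h \<bullet> h) \<noteq> (g \<bullet> h)\<^sup>2"
    and u: "\<bar>u1\<bar> = (1::real)" "\<bar>u2\<bar> = (1::real)"
    and on_g: "\<And>v. g \<bullet> v = 0 \<Longrightarrow> 0 \<le> u2 * (h \<bullet> v) \<Longrightarrow> a \<bullet> v = 0"
    and on_h: "\<And>v. 0 \<le> u1 * (g \<bullet> v) \<Longrightarrow> h \<bullet> v = 0 \<Longrightarrow> a \<bullet> v = 0"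
  shows "a = 0"
proof -
  have uu: "u1 * u1 = 1" "u2 * u2 = 1" using u by (auto simp: abs_if split: if_splits)
  obtain w1 where w1: "g \<bullet> w1 = 0" "h \<bullet> w1 = u2" using gram_nondegenerate_solvable[OF gram] by blast
  obtain w2 where w2: "g \<bullet> w2 = u1" "h \<bullet> w2 = 0" using gram_nondegenerate_solvable[OF gram] by blast
  have a1: "a \<bullet> w1 = 0" using on_g[OF w1(1)] w1(2) uu by simp
  have a2: "a \<bullet> w2 = 0" using on_h[OF _ w2(2)] w2(1) uu by simp
  define w where "w = a - (u2 * (h \<bullet> a)) *\<^sub>R w1 - (u1 * (g \<bullet> a)) *\<^sub>R w2"
  have "g \<bullet> w = 0" "h \<bullet> w = 0"
    unfolding w_def using w1 w2 uu by (simp_all add: inner_diff_right algebra_simps)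
  then have "a \<bullet> w = 0" using on_g by simp
  then have "a \<bullet> a = 0"
    using a1 a2 unfolding w_def by (simp add: inner_diff_right)
  then show ?thesis by simp
qed

section \<open>Sign cells of the canonical complex\<close>

definition sign_cell :: "('n::finite) relu_net \<Rightarrow> nat \<Rightarrow> (nat \<times> nat \<Rightarrow> int) \<Rightarrow> (real^'n) set" where
  "sign_cell N l s = {x. \<forall>l'\<in>{1..l}. \<forall>j<width N l'. sgn_cond (s (l', j)) (pre N l' j x)}"

lemma sign_cell_0 [simp]: "sign_cell N 0 s = UNIV"
  by (simp add: sign_cell_def)

lemma sign_cell_Suc:
  "sign_cell N (Suc l) s = {x \<in> sign_cell N l s. \<forall>j<width N (Suc l). sgn_cond (s (Suc l, j)) (pre N (Suc l) j x)}"
proof -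
  have "{1..Suc l} = insert (Suc l) {1..l}" by auto
  then show ?thesis unfolding sign_cell_def by auto
qed

lemma sign_cellD: "x \<in> sign_cell N L s \<Longrightarrow> l \<in> {1..L} \<Longrightarrow> j < width N l \<Longrightarrow> sgn_cond (s (l, j)) (pre N l j x)"
  by (simp add: sign_cell_def)

lemma cells_eq_sign_cells: "cells N l = {P. P \<noteq> {} \<and> (\<exists>s. P = sign_cell N l s)}"
proof (induction l)
  case 0
  then show ?case by auto
next
  case (Suc l)
  show ?case
  proof (intro set_eqI iffI)
    fix P assume "P \<in> cells N (Suc l)"
    then obtain R s' where P: "P \<noteq> {}" "R \<in> cells N l"
      "P = {x\<in>R. \<forall>j<width N (Suc l). sgn_cond (s' j) (pre N (Suc l) j x)}"
      by auto
    then obtain s where "R = sign_cell N l s" using Suc by auto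
    then have "P = sign_cell N (Suc l) (\<lambda>(l', j). if l' = Suc l then s' j else s (l', j))"
      using P(3) by (auto simp: sign_cell_Suc sign_cell_def)
    then show "P \<in> {P. P \<noteq> {} \<and> (\<exists>s. P = sign_cell N (Suc l) s)}" using P(1) by blast
  next
    fix P assume "P \<in> {P. P \<noteq> {} \<and> (\<exists>s. P = sign_cell N (Suc l) s)}"
    then obtain s where P: "P \<noteq> {}" "P = sign_cell N (Suc l) s" by auto
    then have "sign_cell N l s \<in> cells N l" using Suc by (auto simp: sign_cell_Suc)
    then show "P \<in> cells N (Suc l)" using P
      by (auto simp: sign_cell_Suc intro!: bexI[of _ "sign_cell N l s"] exI[of _ "\<lambda>j. s (Suc l, j)"])
  qed
qed

lemma canonical_eq_sign_cells: "canonical N = {P. P \<noteq> {} \<and> (\<exists>s. P = sign_cell N (depth N) s)}"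
  by (simp add: canonical_def cells_eq_sign_cells)

lemma sign_cell_Int_opposite:
  "sign_cell N l (s(k := 1)) \<inter> sign_cell N l (s(k := -1)) = sign_cell N l (s(k := 0))"
proof -
  have "sgn_cond ((s(k := 1)) i) v \<and> sgn_cond ((s(k := -1)) i) v \<longleftrightarrow> sgn_cond ((s(k := 0)) i) v" for i v
    by (auto simp: sgn_cond_def)
  then show ?thesis unfolding sign_cell_def by blast
qed

lemma continuous_on_pre: "continuous_on UNIV (pre N l j)"
proof -
  have "continuous_on UNIV (pre N (Suc m) j)" for m j
  proof (induction m arbitrary: j)
    case 0
    then show ?case by (simp add: continuous_intros)
  next
    case (Suc m)
    show ?case by (simp only: pre.simps) (intro continuous_intros Suc)
  qed
  then show ?thesis by (cases l) auto
qed

lemma affine_fun_on_pre: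
  assumes "\<forall>m\<in>{1..<l}. \<forall>i<width N m. \<forall>x\<in>S. sgn_cond (s (m, i)) (pre N m i x)"
  shows "affine_fun_on S (pre N l j)"
  using assms
proof (induction l arbitrary: j rule: less_induct)
  case (less l)
  show ?case
  proof (cases l)
    case 0
    then show ?thesis unfolding affine_fun_on_def by (intro exI[of _ 0]) simp
  next
    case (Suc l')
    show ?thesis
    proof (cases l')
      case 0
      then show ?thesis unfolding affine_fun_on_def Suc
        by (intro exI[of _ "W1 N j"] exI[of _ "bias N 1 j"]) simp
    next
      case (Suc m)
      have "affine_fun_on S (\<lambda>x. max 0 (pre N (Suc m) i x))" if "i < width N (Suc m)" for i
      proof (rule affine_fun_on_max_0)
        show "affine_fun_on S (pre N (Suc m) i)"
          using less.IH[of "Suc m"] less.prems \<open>l = Suc l'\<close> Suc by auto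
        show "\<forall>x\<in>S. sgn_cond (s (Suc m, i)) (pre N (Suc m) i x)"
          using less.prems \<open>l = Suc l'\<close> Suc that by auto
      qed
      then have "affine_fun_on S (\<lambda>x. (\<Sum>i<width N (Suc m). Wt N (Suc (Suc m)) j i * max 0 (pre N (Suc m) i x))
          + bias N (Suc (Suc m)) j)"
        by (intro affine_fun_on_add affine_fun_on_const affine_fun_on_sum affine_fun_on_scale) auto
      moreover have "pre N l j = (\<lambda>x. (\<Sum>i<width N (Suc m). Wt N (Suc (Suc m)) j i * max 0 (pre N (Suc m) i x))
          + bias N (Suc (Suc m)) j)"
        using \<open>l = Suc l'\<close> Suc by (intro ext) simp
      ultimately show ?thesis by simp
    qed
  qed
qed

lemma affine_fun_on_sign_cell: "l \<le> Suc L \<Longrightarrow> affine_fun_on (sign_cell N L s) (pre N l j)"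
  by (rule affine_fun_on_pre[where s = s]) (auto simp: sign_cell_def)

lemma convex_sign_cell: "convex (sign_cell N l s)"
proof (induction l)
  case 0
  then show ?case by simp
next
  case (Suc l)
  show ?case
    unfolding convex_alt
  proof (intro ballI allI impI)
    fix x y :: "real^'a" and \<mu> :: real
    assume x: "x \<in> sign_cell N (Suc l) s" and y: "y \<in> sign_cell N (Suc l) s" and \<mu>: "0 \<le> \<mu> \<and> \<mu> \<le> 1"
    define z where "z = (1 - \<mu>) *\<^sub>R x + \<mu> *\<^sub>R y"
    have xl: "x \<in> sign_cell N l s" and yl: "y \<in> sign_cell N l s" using x y by (auto simp: sign_cell_Suc)
    then have zl: "z \<in> sign_cell N l s" using Suc \<mu> unfolding z_def convex_alt by blast
    have "sgn_cond (s (Suc l, j)) (pre N (Suc l) j z)" if j: "j < width N (Suc l)" for j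
    proof -
      obtain a c where ac: "\<forall>w\<in>sign_cell N l s. pre N (Suc l) j w = a \<bullet> w + c"
        using affine_fun_on_sign_cell[of "Suc l" l N s j] unfolding affine_fun_on_def by auto
      have "pre N (Suc l) j z = (1 - \<mu>) * pre N (Suc l) j x + \<mu> * pre N (Suc l) j y"
        using ac xl yl zl unfolding z_def by (simp add: inner_add_right algebra_simps)
      then show ?thesis
        using x y j \<mu> by (simp add: sign_cell_Suc sgn_cond_convex_comb)
    qed
    then show "(1 - \<mu>) *\<^sub>R x + \<mu> *\<^sub>R y \<in> sign_cell N (Suc l) s"
      using zl unfolding z_def by (simp add: sign_cell_Suc)
  qed
qed

lemma affine_on_net_sign_cell: "affine_on_net N (sign_cell N (depth N) s)"
proof -
  have "\<forall>k. \<exists>a c. \<forall>x\<in>sign_cell N (depth N) s. netf N x k = a \<bullet> x + c"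
    using affine_fun_on_sign_cell[of "Suc (depth N)" "depth N" N s]
    unfolding affine_fun_on_def netf_def by blast
  then obtain A C where "\<forall>k. \<forall>x\<in>sign_cell N (depth N) s. netf N x k = A k \<bullet> x + C k"
    by metis
  then show ?thesis unfolding affine_on_net_def by blast
qed

lemma convex_canonical: "P \<in> canonical N \<Longrightarrow> convex P"
  by (auto simp: canonical_eq_sign_cells convex_sign_cell)

lemma affine_on_net_canonical: "P \<in> canonical N \<Longrightarrow> affine_on_net N P"
  by (auto simp: canonical_eq_sign_cells affine_on_net_sign_cell)

lemma interior_canonical_nonempty:
  "P \<in> canonical N \<Longrightarrow> aff_dim P = int CARD('n) \<Longrightarrow> interior (P :: (real^'n::finite) set) \<noteq> {}"
  by (intro interior_nonempty_if_full_aff_dim convex_canonical) (auto simp: canonical_eq_sign_cells)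

lemma sign_cell_subset_if_locally_subset:
  assumes "p \<in> sign_cell N L s" "0 < r" "sign_cell N L s \<inter> ball p r \<subseteq> sign_cell N L s'"
  shows "sign_cell N L s \<subseteq> sign_cell N L s'"
proof
  fix y assume y: "y \<in> sign_cell N L s"
  have "sgn_cond (s' (l, j)) (pre N l j y)" if l: "l \<in> {1..L}" and j: "j < width N l" for l j
  proof (cases "\<forall>x\<in>sign_cell N L s \<inter> ball p r. pre N l j x = 0")
    case True
    obtain a c where ac: "\<forall>x\<in>sign_cell N L s. pre N l j x = a \<bullet> x + c"
      using affine_fun_on_sign_cell[of l L N s j] l unfolding affine_fun_on_def by auto
    have "pre N l j y = 0"
      by (rule affine_zero_near_point_imp_zero[OF convex_sign_cell assms(1,2) ac True y])
    then show ?thesis by simp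
  next
    case False
    then obtain x where x: "x \<in> sign_cell N L s" "x \<in> ball p r" "pre N l j x \<noteq> 0" by blast
    then have "x \<in> sign_cell N L s'" using assms(3) by blast
    then have "sgn_cond (s' (l, j)) (pre N l j x)" using sign_cellD l j by blast
    then show ?thesis
      by (rule sgn_cond_transfer[OF x(3) sign_cellD[OF x(1) l j] _ sign_cellD[OF y l j]])
  qed
  then show "y \<in> sign_cell N L s'" by (simp add: sign_cell_def)
qed

lemma pre_zero_on_bent: "x \<in> bent N l j \<Longrightarrow> pre N l j x = 0"
  unfolding bent_def by auto

lemma subset_bentI:
  assumes "R \<in> cells N (l - 1)" "S \<subseteq> R" "x \<in> R" "y \<in> R" "pre N l j x \<noteq> pre N l j y"
    and "\<forall>z\<in>S. pre N l j z = 0"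
  shows "S \<subseteq> bent N l j"
proof -
  have "{z \<in> R. pre N l j z = 0} \<in> {{z \<in> R. pre N l j z = 0} | R. R \<in> cells N (l - 1) \<and>
      (\<exists>x\<in>R. \<exists>y\<in>R. pre N l j x \<noteq> pre N l j y)}"
    using assms(1,3-5) by blast
  moreover have "S \<subseteq> {z \<in> R. pre N l j z = 0}" using assms(2,6) by blast
  ultimately show ?thesis unfolding bent_def by blast
qed

definition activation_pattern :: "('n::finite) relu_net \<Rightarrow> real^'n \<Rightarrow> nat \<times> nat \<Rightarrow> int" where
  "activation_pattern N x = (\<lambda>(l, j). if 0 < pre N l j x then 1 else if pre N l j x < 0 then -1 else 0)"

lemma sgn_cond_activation_pattern: "sgn_cond (activation_pattern N x (l, j)) (pre N l j x)"
  by (simp add: activation_pattern_def sgn_cond_def)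

lemma activation_pattern_eq_if_sgn_eq:
  "sgn (pre N l j x) = sgn (pre N l j y) \<Longrightarrow> activation_pattern N x (l, j) = activation_pattern N y (l, j)"
  by (auto simp: activation_pattern_def sgn_if split: if_splits)

lemma in_sign_cell_activation_pattern: "x \<in> sign_cell N l (activation_pattern N x)"
  by (simp add: sign_cell_def sgn_cond_activation_pattern)

lemma eventually_sgn_pre_eq:
  assumes "pre N l j p \<noteq> 0"
  shows "\<forall>\<^sub>F x in nhds p. sgn (pre N l j x) = sgn (pre N l j p)"
proof -
  have lim: "(pre N l j \<longlongrightarrow> pre N l j p) (nhds p)"
    using continuous_on_pre[of N l j] by (simp add: continuous_on_eq_continuous_at isCont_def
        tendsto_at_iff_tendsto_nhds[symmetric])
  show ?thesis
  proof (cases "0 < pre N l j p")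
    case True
    then show ?thesis
      using order_tendstoD(1)[OF lim True] by (auto elim!: eventually_mono)
  next
    case False
    then have "pre N l j p < 0" using assms by simp
    then show ?thesis
      using order_tendstoD(2)[OF lim \<open>pre N l j p < 0\<close>] by (auto elim!: eventually_mono)
  qed
qed

lemma exists_sgn_stable_ball:
  "\<exists>r>0. \<forall>x\<in>ball p r. \<forall>l\<in>{1..depth N}. \<forall>j<width N l.
     pre N l j p \<noteq> 0 \<longrightarrow> sgn (pre N l j x) = sgn (pre N l j p)"
proof -
  have "\<forall>\<^sub>F x in nhds p. pre N l j p \<noteq> 0 \<longrightarrow> sgn (pre N l j x) = sgn (pre N l j p)" for l j
  proof (cases "pre N l j p = 0")
    case False
    then show ?thesis using eventually_sgn_pre_eq[OF False] by (simp add: False)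
  qed simp
  then have "\<forall>\<^sub>F x in nhds p. \<forall>(l, j)\<in>Sigma {1..depth N} (\<lambda>l. {..<width N l}).
      pre N l j p \<noteq> 0 \<longrightarrow> sgn (pre N l j x) = sgn (pre N l j p)"
    by (intro eventually_ball_finite) auto
  then obtain r where "0 < r" and r: "\<And>x. dist x p < r \<Longrightarrow> \<forall>(l, j)\<in>Sigma {1..depth N} (\<lambda>l. {..<width N l}).
      pre N l j p \<noteq> 0 \<longrightarrow> sgn (pre N l j x) = sgn (pre N l j p)"
    unfolding eventually_nhds_metric by blast
  show ?thesis
    by (intro exI[of _ r] conjI \<open>0 < r\<close> ballI allI impI) (use r in \<open>auto simp: dist_commute\<close>)
qed

section \<open>Constancy across facets without breakpoints\<close>

lemma pre_eq_beyond_dead_layer: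
  assumes "1 \<le> l" "l < m" "\<forall>j<width N l. pre N l j x < 0" "\<forall>j<width N l. pre N l j y < 0"
  shows "pre N m i x = pre N m i y"
  using assms(2)
proof (induction m arbitrary: i)
  case 0
  then show ?case by simp
next
  case (Suc m)
  obtain m' where m: "m = Suc m'" using assms(1) Suc.prems by (cases m) auto
  have "max 0 (pre N m i' x) = max 0 (pre N m i' y)" if "i' < width N m" for i'
  proof (cases "l = m")
    case True
    then have "pre N m i' x < 0" "pre N m i' y < 0" using assms(3,4) that by auto
    then show ?thesis by simp
  next
    case False
    then show ?thesis using Suc by simp
  qed
  then show ?case using m by simp
qed

lemma netf_locally_const_at_dead_layer:
  assumes "l \<in> {1..depth N}" "\<forall>j<width N l. pre N l j y < 0"
  shows "\<exists>e>0. \<forall>x\<in>ball y e. \<forall>k. netf N x k = netf N y k"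
proof -
  have "\<forall>\<^sub>F x in nhds y. \<forall>j\<in>{..<width N l}. sgn (pre N l j x) = sgn (pre N l j y)"
    using assms(2) by (intro eventually_ball_finite ballI eventually_sgn_pre_eq) auto
  then obtain e where "0 < e" and e: "\<And>x j. dist x y < e \<Longrightarrow> j < width N l \<Longrightarrow> sgn (pre N l j x) = sgn (pre N l j y)"
    unfolding eventually_nhds_metric by auto
  have "netf N x k = netf N y k" if "x \<in> ball y e" for x k
  proof -
    have "sgn (pre N l j x) < 0" if "j < width N l" for j
      using e[of x j] \<open>x \<in> ball y e\<close> assms(2) that by (simp add: dist_commute)
    then have "\<forall>j<width N l. pre N l j x < 0"
      by (simp add: sgn_less)
    then show ?thesis
      unfolding netf_def using assms by (intro pre_eq_beyond_dead_layer[of l]) auto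
  qed
  then show ?thesis using \<open>0 < e\<close> by blast
qed

lemma linear_part_eq_near_point:
  fixes C U :: "'a::euclidean_space set"
  assumes "convex C" "interior C \<noteq> {}" "x0 \<in> C" "open U" "x0 \<in> U"
    and "\<forall>x\<in>C. f x = a \<bullet> x + c" "\<forall>x\<in>U. f x = b \<bullet> x + d"
  shows "a = b"
proof (rule linear_part_unique_on_open)
  show "open (U \<inter> interior C)" "U \<inter> interior C \<noteq> {}"
    using assms(4) convex_open_meets_interior[OF assms(1-5)] by auto
  show "\<forall>x\<in>U \<inter> interior C. a \<bullet> x + c = b \<bullet> x + d"
  proof
    fix x assume x: "x \<in> U \<inter> interior C"
    then have "x \<in> C" using interior_subset by blast
    then have "f x = a \<bullet> x + c" using assms(6) by blast
    moreover have "f x = b \<bullet> x + d" using assms(7) x by blast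
    ultimately show "a \<bullet> x + c = b \<bullet> x + d" by simp
  qed
qed

lemma lin_part_eq:
  assumes "interior C \<noteq> {}" "\<forall>x\<in>C. \<forall>k<nout N. netf N x k = A k \<bullet> x + c k" "k < nout N"
  shows "lin_part N C k = A k"
proof -
  have "\<exists>A c. \<forall>x\<in>C. \<forall>k<nout N. netf N x k = A k \<bullet> x + c k"
    using assms(2) by blast
  then have "\<exists>c. \<forall>x\<in>C. \<forall>k<nout N. netf N x k = lin_part N C k \<bullet> x + c k"
    unfolding lin_part_def by (rule someI_ex)
  then obtain c' where c': "\<forall>x\<in>C. \<forall>k<nout N. netf N x k = lin_part N C k \<bullet> x + c' k"
    by blast
  show ?thesis
  proof (rule linear_part_unique_on_open)
    show "\<forall>x\<in>interior C. lin_part N C k \<bullet> x + c' k = A k \<bullet> x + c k"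
    proof
      fix x assume "x \<in> interior C"
      then have "x \<in> C" using interior_subset by blast
      then have "netf N x k = lin_part N C k \<bullet> x + c' k" "netf N x k = A k \<bullet> x + c k"
        using assms(2,3) c' by blast+
      then show "lin_part N C k \<bullet> x + c' k = A k \<bullet> x + c k" by simp
    qed
  qed (use assms(1) in auto)
qed

lemma netf_const_on_cell_if_locally_const:
  assumes "convex C" "interior C \<noteq> {}" "affine_on_net N C" "y \<in> C"
    and "0 < e" "\<forall>x\<in>ball y e. \<forall>k. netf N x k = netf N y k"
    and "x \<in> C" "k < nout N"
  shows "netf N x k = netf N y k"
proof -
  obtain A c where Ac: "\<forall>x\<in>C. \<forall>k<nout N. netf N x k = A k \<bullet> x + c k"
    using assms(3) unfolding affine_on_net_def by blast
  have "A k = 0"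
  proof (rule linear_part_eq_near_point[of C y "ball y e" "\<lambda>x. netf N x k" _ "c k" _ "netf N y k"])
    show "\<forall>x\<in>C. netf N x k = A k \<bullet> x + c k" using Ac assms(8) by blast
    show "\<forall>x\<in>ball y e. netf N x k = 0 \<bullet> x + netf N y k" using assms(6) by simp
  qed (use assms(1,2,4,5) in auto)
  then show ?thesis using Ac assms(4,7,8) by simp
qed

lemma trop_weight_zero_at_non_breakpoint:
  assumes "P \<in> canonical N" "Q \<in> canonical N" "aff_dim P = int CARD('n)" "aff_dim Q = int CARD('n)"
    and "x0 \<in> P" "x0 \<in> Q" "\<not> breakpoint N x0"
  shows "trop_weight N P Q (\<sigma> :: (real^'n::finite) set) = (\<lambda>_. 0)"
proof -
  obtain U B d where U: "open U" "x0 \<in> U" "\<forall>x\<in>U. \<forall>k<nout N. netf N x k = B k \<bullet> x + d k"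
    using assms(7) unfolding breakpoint_def affine_on_net_def by blast
  have lin_part_eq_B: "lin_part N C k = B k"
    if C: "C \<in> canonical N" "aff_dim C = int CARD('n)" "x0 \<in> C" and k: "k < nout N" for C k
  proof -
    obtain A c where Ac: "\<forall>x\<in>C. \<forall>k<nout N. netf N x k = A k \<bullet> x + c k"
      using affine_on_net_canonical[OF C(1)] unfolding affine_on_net_def by blast
    have int: "interior C \<noteq> {}" using interior_canonical_nonempty C(1,2) by blast
    have "A k = B k"
    proof (rule linear_part_eq_near_point[of C x0 U "\<lambda>x. netf N x k" _ "c k" _ "d k"])
      show "convex C" using convex_canonical[OF C(1)] .
      show "\<forall>x\<in>C. netf N x k = A k \<bullet> x + c k" using Ac k by blast
      show "\<forall>x\<in>U. netf N x k = B k \<bullet> x + d k" using U(3) k by blast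
    qed (use int U C(3) in auto)
    then show ?thesis using lin_part_eq[OF int Ac k] by simp
  qed
  show ?thesis
    using lin_part_eq_B[of P] lin_part_eq_B[of Q] assms by (auto simp: trop_weight_def)
qed

definition net_const_on :: "('n::finite) relu_net \<Rightarrow> (real^'n) set \<Rightarrow> bool" where
  "net_const_on N C \<longleftrightarrow> (\<forall>x\<in>C. \<forall>y\<in>C. \<forall>k<nout N. netf N x k = netf N y k)"

text \<open>A facet of the canonical complex that is not made of breakpoints carries tropical weight
  zero, so by cancellation-freeness some layer is dead along it, which freezes the network on
  both adjacent full-dimensional cells.\<close>
lemma net_const_on_cells_at_regular_facet:
  fixes C C' :: "(real^'n::finite) set"
  assumes cf: "cancellation_free N"
    and C: "C \<in> canonical N" "aff_dim C = int CARD('n)"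
    and C': "C' \<in> canonical N" "aff_dim C' = int CARD('n)" "C \<noteq> C'"
    and facet: "C \<inter> C' \<in> canonical N" "aff_dim (C \<inter> C') = int CARD('n) - 1"
    and regular: "\<not> C \<inter> C' \<subseteq> {x. breakpoint N x}"
  shows "net_const_on N (C \<union> C')"
proof -
  obtain x0 where x0: "x0 \<in> C" "x0 \<in> C'" "\<not> breakpoint N x0"
    using regular by blast
  have "trop_weight N C C' (C \<inter> C') = (\<lambda>_. 0)"
    using trop_weight_zero_at_non_breakpoint[OF C(1) C'(1) C(2) C'(2) x0] .
  then obtain l where l: "l \<in> {1..depth N}" "\<forall>j<width N l. \<forall>x\<in>rel_interior (C \<inter> C'). pre N l j x < 0"
    using cf C C' facet unfolding cancellation_free_def by blast
  have "rel_interior (C \<inter> C') \<noteq> {}"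
    using convex_canonical[OF facet(1)] x0 rel_interior_eq_empty by blast
  then obtain y where y: "y \<in> rel_interior (C \<inter> C')" by blast
  then have yCC': "y \<in> C" "y \<in> C'" using rel_interior_subset by blast+
  obtain e where e: "0 < e" "\<forall>x\<in>ball y e. \<forall>k. netf N x k = netf N y k"
    using netf_locally_const_at_dead_layer[OF l(1)] l(2) y by blast
  have "netf N x k = netf N y k" if "D \<in> canonical N" "aff_dim D = int CARD('n)" "y \<in> D"
    "x \<in> D" "k < nout N" for D x k
    by (rule netf_const_on_cell_if_locally_const[OF convex_canonical[OF that(1)]
          interior_canonical_nonempty[OF that(1,2)] affine_on_net_canonical[OF that(1)] that(3) e that(4,5)])
  then have "netf N x k = netf N y k" if "x \<in> C \<union> C'" "k < nout N" for x k
    using that yCC' C C' by blast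
  then show ?thesis unfolding net_const_on_def by simp
qed

lemma net_const_on_subset: "net_const_on N C \<Longrightarrow> D \<subseteq> C \<Longrightarrow> net_const_on N D"
  unfolding net_const_on_def by blast

section \<open>The neighbourhood of a ridge\<close>

locale ridge_neighbourhood =
  fixes N :: "'n::finite relu_net" and \<tau> :: "(real^'n) set" and t :: "nat \<times> nat \<Rightarrow> int"
    and p :: "real^'n" and r :: real and la ja lb jb :: nat
  assumes tau_eq: "\<tau> = sign_cell N (depth N) t"
    and tau_dim: "aff_dim \<tau> = int CARD('n) - 2"
    and p_rel_interior: "p \<in> rel_interior \<tau>"
    and r_pos: "0 < r"
    and sgn_stable: "\<And>x l j. x \<in> ball p r \<Longrightarrow> l \<in> {1..depth N} \<Longrightarrow> j < width N l \<Longrightarrow>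
      pre N l j p \<noteq> 0 \<Longrightarrow> sgn (pre N l j x) = sgn (pre N l j p)"
    and bending: "{(l, j). l \<in> {1..depth N} \<and> j < width N l \<and> \<tau> \<subseteq> bent N l j} = {(la, ja), (lb, jb)}"
    and neurons_distinct: "(la, ja) \<noteq> (lb, jb)"
    and la_le_lb: "la \<le> lb" \<comment> \<open>so that \<open>za\<close> does not depend on \<open>zb\<close>\<close>
begin

abbreviation za :: "real^'n \<Rightarrow> real" where "za \<equiv> pre N la ja"
abbreviation zb :: "real^'n \<Rightarrow> real" where "zb \<equiv> pre N lb jb"

lemma p_in_tau: "p \<in> \<tau>"
  using p_rel_interior rel_interior_subset by blast

lemma p_in_ball: "p \<in> ball p r"
  using r_pos by simp

lemma tau_sgn_cond: "y \<in> \<tau> \<Longrightarrow> l \<in> {1..depth N} \<Longrightarrow> j < width N l \<Longrightarrow> sgn_cond (t (l, j)) (pre N l j y)"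
  using tau_eq sign_cellD by blast

lemma pre_zero_on_tau:
  assumes "l \<in> {1..depth N}" "j < width N l" "pre N l j p = 0" "y \<in> \<tau>"
  shows "pre N l j y = 0"
proof -
  obtain a c where ac: "\<forall>x\<in>\<tau>. pre N l j x = a \<bullet> x + c"
    using affine_fun_on_sign_cell[of l "depth N" N t j] assms(1) tau_eq unfolding affine_fun_on_def by auto
  have "convex \<tau>" using convex_sign_cell tau_eq by simp
  moreover have "\<forall>x\<in>\<tau>. sgn_cond (t (l, j)) (pre N l j x)" using tau_sgn_cond assms(1,2) by blast
  ultimately show ?thesis
    using affine_sgn_cond_zero_if_zero_at_rel_interior[OF _ p_rel_interior ac _ assms(3,4)] by blast
qed

lemma la_bends: "la \<in> {1..depth N}" "ja < width N la" "\<tau> \<subseteq> bent N la ja"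
  and lb_bends: "lb \<in> {1..depth N}" "jb < width N lb" "\<tau> \<subseteq> bent N lb jb"
  using bending by (auto simp: set_eq_iff)

lemma za_zero_on_tau: "y \<in> \<tau> \<Longrightarrow> za y = 0"
  and zb_zero_on_tau: "y \<in> \<tau> \<Longrightarrow> zb y = 0"
  using la_bends lb_bends pre_zero_on_bent by blast+

lemma tau_subset_activation_cell:
  assumes x: "x \<in> ball p r" and "L \<le> depth N"
  shows "\<tau> \<subseteq> sign_cell N L (activation_pattern N x)"
proof
  fix y assume y: "y \<in> \<tau>"
  have "sgn_cond (activation_pattern N x (l, j)) (pre N l j y)"
    if l: "l \<in> {1..L}" "j < width N l" for l j
  proof -
    have l_range: "l \<in> {1..depth N}" using l assms(2) by auto
    show ?thesis
    proof (cases "pre N l j p = 0")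
      case True
      then show ?thesis using pre_zero_on_tau[OF l_range l(2) _ y] by simp
    next
      case False
      then have "activation_pattern N x (l, j) = activation_pattern N p (l, j)"
        using sgn_stable[OF x l_range l(2)] by (intro activation_pattern_eq_if_sgn_eq) simp
      then show ?thesis
        using sgn_cond_transfer[OF False tau_sgn_cond[OF p_in_tau l_range l(2)]
            sgn_cond_activation_pattern tau_sgn_cond[OF y l_range l(2)]] by simp
    qed
  qed
  then show "y \<in> sign_cell N L (activation_pattern N x)" unfolding sign_cell_def by blast
qed

text \<open>Supertransversality at work: a further neuron vanishing at \<open>p\<close> but not near \<open>p\<close>
  would bend along all of \<open>\<tau>\<close>, giving a third bent hyperplane through \<open>\<tau>\<close>.\<close>
lemma other_pre_zero_near_p:
  assumes l: "l \<in> {1..depth N}" "j < width N l" and zero: "pre N l j p = 0"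
    and other: "(l, j) \<notin> {(la, ja), (lb, jb)}" and x: "x \<in> ball p r"
  shows "pre N l j x = 0"
proof (rule ccontr)
  assume nonzero: "pre N l j x \<noteq> 0"
  define R where "R = sign_cell N (l - 1) (activation_pattern N x)"
  have "\<tau> \<subseteq> R" unfolding R_def using l by (intro tau_subset_activation_cell[OF x]) auto
  have "x \<in> R" unfolding R_def by (rule in_sign_cell_activation_pattern)
  then have "R \<in> cells N (l - 1)" unfolding R_def cells_eq_sign_cells by blast
  have "\<tau> \<subseteq> bent N l j"
  proof (rule subset_bentI[OF \<open>R \<in> cells N (l - 1)\<close> \<open>\<tau> \<subseteq> R\<close> \<open>x \<in> R\<close>])
    show "p \<in> R" "pre N l j x \<noteq> pre N l j p"
      using \<open>\<tau> \<subseteq> R\<close> p_in_tau zero nonzero by auto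
    show "\<forall>y\<in>\<tau>. pre N l j y = 0" using pre_zero_on_tau[OF l zero] by blast
  qed
  then have "(l, j) \<in> {(l, j). l \<in> {1..depth N} \<and> j < width N l \<and> \<tau> \<subseteq> bent N l j}"
    using l by simp
  then show False unfolding bending using other by blast
qed

lemma sgn_pre_near_p:
  assumes "l \<in> {1..depth N}" "j < width N l" "(l, j) \<notin> {(la, ja), (lb, jb)}" "x \<in> ball p r"
  shows "sgn (pre N l j x) = sgn (pre N l j p)"
  using assms other_pre_zero_near_p sgn_stable by (cases "pre N l j p = 0") auto

lemma sign_cell_near_p:
  assumes "p \<in> sign_cell N (depth N) s" "x \<in> ball p r"
  shows "x \<in> sign_cell N (depth N) s \<longleftrightarrow> sgn_cond (s (la, ja)) (za x) \<and> sgn_cond (s (lb, jb)) (zb x)"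
proof
  assume "x \<in> sign_cell N (depth N) s"
  then show "sgn_cond (s (la, ja)) (za x) \<and> sgn_cond (s (lb, jb)) (zb x)"
    using sign_cellD[OF _ la_bends(1,2)] sign_cellD[OF _ lb_bends(1,2)] by blast
next
  assume ab: "sgn_cond (s (la, ja)) (za x) \<and> sgn_cond (s (lb, jb)) (zb x)"
  have "sgn_cond (s (l, j)) (pre N l j x)" if "l \<in> {1..depth N}" "j < width N l" for l j
  proof (cases "(l, j) \<in> {(la, ja), (lb, jb)}")
    case True
    then show ?thesis using ab by auto
  next
    case False
    then show ?thesis
      using sgn_cond_same_sgn[OF sgn_pre_near_p[OF that False assms(2), symmetric]]
        sign_cellD[OF assms(1) that] by blast
  qed
  then show "x \<in> sign_cell N (depth N) s" by (simp add: sign_cell_def)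
qed

lemma other_sgn_cond_near_p:
  assumes "m \<in> {1..depth N}" "i < width N m" "(m, i) \<notin> {(la, ja), (lb, jb)}" "x \<in> ball p r"
  shows "sgn_cond (activation_pattern N p (m, i)) (pre N m i x)"
  using sgn_cond_same_sgn[OF sgn_pre_near_p[OF assms, symmetric] sgn_cond_activation_pattern] .

lemma za_linear_near_p: "\<exists>g. \<forall>x\<in>ball p r. za x = g \<bullet> (x - p)"
proof -
  have "affine_fun_on (ball p r) za"
  proof (rule affine_fun_on_pre[where s = "activation_pattern N p"], intro ballI allI impI)
    fix m i x assume m: "m \<in> {1..<la}" and i: "i < width N m" and x: "x \<in> ball p r"
    have "(m, i) \<notin> {(la, ja), (lb, jb)}" using m la_le_lb by auto
    then show "sgn_cond (activation_pattern N p (m, i)) (pre N m i x)"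
      using other_sgn_cond_near_p[OF _ i _ x] m la_bends(1) by auto
  qed
  then show ?thesis
    using affine_fun_on_vanishing[OF _ p_in_ball] za_zero_on_tau[OF p_in_tau] by blast
qed

lemma zb_linear_near_p:
  assumes u: "u \<in> {1, -1}"
  shows "\<exists>g. \<forall>x\<in>ball p r. 0 \<le> of_int u * za x \<longrightarrow> zb x = g \<bullet> (x - p)"
proof -
  define S where "S = {x \<in> ball p r. 0 \<le> of_int u * za x}"
  have "affine_fun_on S zb"
  proof (rule affine_fun_on_pre[where s = "(activation_pattern N p)((la, ja) := u)"], intro ballI allI impI)
    fix m i x assume m: "m \<in> {1..<lb}" and i: "i < width N m" and x: "x \<in> S"
    show "sgn_cond (((activation_pattern N p)((la, ja) := u)) (m, i)) (pre N m i x)"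
    proof (cases "(m, i) = (la, ja)")
      case True
      then show ?thesis using x u unfolding S_def by (simp add: sgn_cond_unit_iff)
    next
      case False
      moreover have "(m, i) \<noteq> (lb, jb)" using m by auto
      ultimately show ?thesis
        using other_sgn_cond_near_p[OF _ i _, of x] m lb_bends(1) x unfolding S_def by auto
    qed
  qed
  moreover have "p \<in> S" using p_in_ball za_zero_on_tau[OF p_in_tau] unfolding S_def by simp
  ultimately show ?thesis
    using affine_fun_on_vanishing zb_zero_on_tau[OF p_in_tau] unfolding S_def by blast
qed

definition za_normal :: "real^'n" where
  "za_normal = (SOME g. \<forall>x\<in>ball p r. za x = g \<bullet> (x - p))"

text \<open>Meaningful only for \<open>u \<in> {1, -1}\<close>.\<close>
definition zb_normal :: "int \<Rightarrow> real^'n" where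
  "zb_normal u = (SOME g. \<forall>x\<in>ball p r. 0 \<le> of_int u * za x \<longrightarrow> zb x = g \<bullet> (x - p))"

lemma za_near_p: "x \<in> ball p r \<Longrightarrow> za x = za_normal \<bullet> (x - p)"
  using someI_ex[OF za_linear_near_p] unfolding za_normal_def by blast

lemma zb_near_p: "u \<in> {1, -1} \<Longrightarrow> x \<in> ball p r \<Longrightarrow> 0 \<le> of_int u * za x \<Longrightarrow> zb x = zb_normal u \<bullet> (x - p)"
  using someI_ex[OF zb_linear_near_p] unfolding zb_normal_def by blast

lemma tau_near_p: "x \<in> ball p r \<Longrightarrow> za x = 0 \<Longrightarrow> zb x = 0 \<Longrightarrow> x \<in> \<tau>"
  using sign_cell_near_p[of t x] p_in_tau tau_eq by simp

text \<open>Otherwise the two bent hyperplanes would meet in codimension one near \<open>p\<close>, inside \<open>\<tau>\<close>.\<close>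
lemma normals_independent:
  assumes u: "u \<in> {1, -1}"
  shows "(za_normal \<bullet> za_normal) * (zb_normal u \<bullet> zb_normal u) \<noteq> (za_normal \<bullet> zb_normal u)\<^sup>2"
proof
  assume "(za_normal \<bullet> za_normal) * (zb_normal u \<bullet> zb_normal u) = (za_normal \<bullet> zb_normal u)\<^sup>2"
  then obtain a where a: "\<And>y. (za_normal \<bullet> y = 0 \<and> zb_normal u \<bullet> y = 0) \<longleftrightarrow> a \<bullet> y = 0"
    using gram_degenerate_common_zeros by blast
  have "ball p r \<inter> {x. a \<bullet> (x - p) = 0} \<subseteq> \<tau>"
  proof
    fix x assume x: "x \<in> ball p r \<inter> {x. a \<bullet> (x - p) = 0}"
    then have x_ball: "x \<in> ball p r" and "za_normal \<bullet> (x - p) = 0" "zb_normal u \<bullet> (x - p) = 0"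
      using a[of "x - p"] by auto
    moreover have "za x = 0" using za_near_p[OF x_ball] calculation by simp
    moreover have "zb x = 0" using zb_near_p[OF u x_ball] calculation by simp
    ultimately show "x \<in> \<tau>" using tau_near_p by blast
  qed
  then have "aff_dim (ball p r \<inter> {x. a \<bullet> (x - p) = 0}) \<le> aff_dim \<tau>"
    by (rule aff_dim_subset)
  then show False
    using aff_dim_ball_Int_hyperplane_ge[OF r_pos, where a = a and p = p] tau_dim by simp
qed

lemma za_normal_nonzero: "za_normal \<noteq> 0"
  and zb_normal_nonzero: "u \<in> {1, -1} \<Longrightarrow> zb_normal u \<noteq> 0"
  using normals_independent[of 1] normals_independent[of u] by auto

lemma exists_near_p_with_values: "\<exists>x\<in>ball p r. \<exists>\<epsilon>>0. za x = \<epsilon> * \<alpha> \<and> zb x = \<epsilon> * \<beta>"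
proof -
  define u :: int where "u = (if 0 \<le> \<alpha> then 1 else -1)"
  have u: "u \<in> {1, -1}" and u_\<alpha>: "0 \<le> of_int u * \<alpha>" unfolding u_def by auto
  obtain v where v: "za_normal \<bullet> v = \<alpha>" "zb_normal u \<bullet> v = \<beta>"
    using gram_nondegenerate_solvable[OF normals_independent[OF u]] by blast
  obtain \<epsilon> where \<epsilon>: "0 < \<epsilon>" "p + \<epsilon> *\<^sub>R v \<in> ball p r"
    using open_contains_ray_point[OF open_ball p_in_ball] by blast
  have za: "za (p + \<epsilon> *\<^sub>R v) = \<epsilon> * \<alpha>" using za_near_p[OF \<epsilon>(2)] v by simp
  then have "0 \<le> of_int u * za (p + \<epsilon> *\<^sub>R v)" using u_\<alpha> \<epsilon>(1) by (simp add: mult.left_commute)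
  then have "zb (p + \<epsilon> *\<^sub>R v) = \<epsilon> * \<beta>" using zb_near_p[OF u \<epsilon>(2)] v by simp
  then show ?thesis using za \<epsilon> by blast
qed

lemma exists_near_p_with_signs:
  assumes "\<sigma>1 \<in> {-1, 0, 1}" "\<sigma>2 \<in> {-1, 0, 1}"
  shows "\<exists>x\<in>ball p r. sgn (za x) = of_int \<sigma>1 \<and> sgn (zb x) = of_int \<sigma>2"
proof -
  obtain x \<epsilon> where x: "x \<in> ball p r" "0 < \<epsilon>" "za x = \<epsilon> * of_int \<sigma>1" "zb x = \<epsilon> * of_int \<sigma>2"
    using exists_near_p_with_values by blast
  then have "sgn (za x) = of_int \<sigma>1" "sgn (zb x) = of_int \<sigma>2"
    using assms by (auto simp: sgn_mult)
  then show ?thesis using x(1) by blast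
qed

text \<open>The cells through \<open>\<tau>\<close>, indexed by the signs of \<open>za\<close> and \<open>zb\<close>: two nonzero signs give
  the four chambers, exactly one zero sign the four facets.\<close>
definition star_cell :: "int \<Rightarrow> int \<Rightarrow> (real^'n) set" where
  "star_cell s1 s2 = sign_cell N (depth N) (t((la, ja) := s1, (lb, jb) := s2))"

lemma tau_subset_star_cell: "\<tau> \<subseteq> star_cell s1 s2"
proof
  fix y assume y: "y \<in> \<tau>"
  have "sgn_cond ((t((la, ja) := s1, (lb, jb) := s2)) (l, j)) (pre N l j y)"
    if "l \<in> {1..depth N}" "j < width N l" for l j
  proof -
    consider "(l, j) = (lb, jb)" | "(l, j) = (la, ja)" | "(l, j) \<notin> {(la, ja), (lb, jb)}" by blast
    then show ?thesis
    proof cases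
      case 1
      then show ?thesis using zb_zero_on_tau[OF y] by simp
    next
      case 2
      then show ?thesis using za_zero_on_tau[OF y] neurons_distinct by simp
    next
      case 3
      then show ?thesis using tau_sgn_cond[OF y that] by auto
    qed
  qed
  then show "y \<in> star_cell s1 s2" unfolding star_cell_def sign_cell_def by blast
qed

lemma p_in_star_cell: "p \<in> star_cell s1 s2"
  using tau_subset_star_cell p_in_tau by blast

lemma star_pattern_la: "(t((la, ja) := s1, (lb, jb) := s2)) (la, ja) = s1"
  by (simp only: fun_upd_other[OF neurons_distinct] fun_upd_same)

lemma star_cell_near_p:
  "x \<in> ball p r \<Longrightarrow> x \<in> star_cell s1 s2 \<longleftrightarrow> sgn_cond s1 (za x) \<and> sgn_cond s2 (zb x)"
  using sign_cell_near_p[OF p_in_star_cell[unfolded star_cell_def]]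
  unfolding star_cell_def star_pattern_la fun_upd_same .

lemma star_cell_canonical: "star_cell s1 s2 \<in> canonical N"
  using p_in_star_cell unfolding canonical_eq_sign_cells star_cell_def by blast

lemma convex_star_cell: "convex (star_cell s1 s2)"
  unfolding star_cell_def by (rule convex_sign_cell)

lemma star_cell_Int_la: "star_cell 1 u \<inter> star_cell (-1) u = star_cell 0 u"
  using sign_cell_Int_opposite[of N "depth N" "t((lb, jb) := u)" "(la, ja)"]
  unfolding star_cell_def by (simp add: fun_upd_twist[OF neurons_distinct])

lemma star_cell_Int_lb: "star_cell u 1 \<inter> star_cell u (-1) = star_cell u 0"
  using sign_cell_Int_opposite[of N "depth N" "t((la, ja) := u)" "(lb, jb)"]
  unfolding star_cell_def by simp

lemma star_cell_la_0_subset: "v \<in> {1, -1} \<Longrightarrow> star_cell 0 u \<subseteq> star_cell v u"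
  using star_cell_Int_la[of u] by auto

lemma star_cell_lb_0_subset: "v \<in> {1, -1} \<Longrightarrow> star_cell u 0 \<subseteq> star_cell u v"
  using star_cell_Int_lb[of u] by auto

lemma star_cell_inj:
  assumes "s1 \<in> {-1, 0, 1}" "s2 \<in> {-1, 0, 1}" "s1' \<in> {-1, 0, 1}" "s2' \<in> {-1, 0, 1}"
    and "star_cell s1 s2 = star_cell s1' s2'"
  shows "s1 = s1' \<and> s2 = s2'"
proof -
  obtain x where x: "x \<in> ball p r" "sgn (za x) = of_int s1" "sgn (zb x) = of_int s2"
    using exists_near_p_with_signs assms(1,2) by blast
  obtain y where y: "y \<in> ball p r" "sgn (za y) = of_int s1'" "sgn (zb y) = of_int s2'"
    using exists_near_p_with_signs assms(3,4) by blast
  have "x \<in> star_cell s1 s2" "y \<in> star_cell s1' s2'"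
    using star_cell_near_p x y sgn_cond_of_sgn by blast+
  then have "x \<in> star_cell s1' s2'" "y \<in> star_cell s1 s2"
    using assms(5) by simp_all
  then have "sgn_cond s1' (za x)" "sgn_cond s2' (zb x)" "sgn_cond s1 (za y)" "sgn_cond s2 (zb y)"
    using star_cell_near_p x(1) y(1) by blast+
  then show ?thesis
    using sgn_cond_mutual_imp_eq[OF assms(1,3) x(2) y(2)] sgn_cond_mutual_imp_eq[OF assms(2,4) x(3) y(3)] by blast
qed

lemma aff_dim_chamber:
  assumes c: "c1 \<in> {1, -1}" "c2 \<in> {1, -1}"
  shows "aff_dim (star_cell c1 c2) = int CARD('n)"
proof -
  define U where "U = ball p r \<inter> {x. 0 < of_int c1 * za x} \<inter> {x. 0 < of_int c2 * zb x}"
  have "open U" unfolding U_def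
    by (intro open_Int open_ball open_Collect_less continuous_intros continuous_on_pre)
  moreover obtain x \<epsilon> where "x \<in> ball p r" "0 < \<epsilon>" "za x = \<epsilon> * of_int c1" "zb x = \<epsilon> * of_int c2"
    using exists_near_p_with_values by blast
  then have "x \<in> U" using c unfolding U_def by auto
  ultimately have "aff_dim U = int CARD('n)"
    using aff_dim_open[of U] by auto
  moreover have "U \<subseteq> star_cell c1 c2"
    using star_cell_near_p sgn_cond_unit_iff[OF c(1)] sgn_cond_unit_iff[OF c(2)] unfolding U_def by auto
  ultimately have "int CARD('n) \<le> aff_dim (star_cell c1 c2)"
    using aff_dim_subset[of U "star_cell c1 c2"] by simp
  then show ?thesis using aff_dim_le_DIM[of "star_cell c1 c2"] by simp
qed

lemma star_cell_0_0: "star_cell 0 0 = \<tau>"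
proof
  have "star_cell 0 0 \<inter> ball p r \<subseteq> \<tau>"
    using star_cell_near_p tau_near_p by auto
  then show "star_cell 0 0 \<subseteq> \<tau>"
    using sign_cell_subset_if_locally_subset[OF p_in_star_cell[unfolded star_cell_def] r_pos]
    unfolding star_cell_def tau_eq by blast
qed (rule tau_subset_star_cell)

lemma zeros_on_affine_hull_tau_near_p:
  assumes "x \<in> affine hull \<tau>" "x \<in> ball p r"
  shows "za x = 0" "zb x = 0"
proof -
  have convex_tau: "convex \<tau>" using convex_sign_cell tau_eq by simp
  have "\<tau> \<inter> ball p r \<subseteq> {y. za_normal \<bullet> y = za_normal \<bullet> p}"
  proof
    fix y assume y: "y \<in> \<tau> \<inter> ball p r"
    then have "za_normal \<bullet> (y - p) = 0" using za_near_p za_zero_on_tau by (metis IntD1 IntD2)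
    then show "y \<in> {y. za_normal \<bullet> y = za_normal \<bullet> p}" by (simp add: inner_diff_right)
  qed
  then have "affine hull \<tau> \<subseteq> {y. za_normal \<bullet> y = za_normal \<bullet> p}"
    by (rule affine_hull_in_hyperplane_if_locally[OF convex_tau p_in_tau r_pos])
  then show za: "za x = 0" using assms za_near_p by (auto simp: inner_diff_right)
  have "\<tau> \<inter> ball p r \<subseteq> {y. zb_normal 1 \<bullet> y = zb_normal 1 \<bullet> p}"
  proof
    fix y assume y: "y \<in> \<tau> \<inter> ball p r"
    then have "zb y = zb_normal 1 \<bullet> (y - p)" using zb_near_p[of 1 y] za_zero_on_tau by simp
    then have "zb_normal 1 \<bullet> (y - p) = 0" using zb_zero_on_tau y by simp
    then show "y \<in> {y. zb_normal 1 \<bullet> y = zb_normal 1 \<bullet> p}" by (simp add: inner_diff_right)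
  qed
  then have "affine hull \<tau> \<subseteq> {y. zb_normal 1 \<bullet> y = zb_normal 1 \<bullet> p}"
    by (rule affine_hull_in_hyperplane_if_locally[OF convex_tau p_in_tau r_pos])
  then show "zb x = 0" using assms zb_near_p[of 1, OF _ assms(2)] za by (auto simp: inner_diff_right)
qed

lemma aff_dim_ge_if_off_tau:
  assumes "\<tau> \<subseteq> P" "x \<in> P" "x \<in> ball p r" "za x \<noteq> 0 \<or> zb x \<noteq> 0"
  shows "int CARD('n) - 1 \<le> aff_dim P"
proof -
  have "x \<notin> affine hull \<tau>" using zeros_on_affine_hull_tau_near_p assms(3,4) by blast
  then have "aff_dim (insert x \<tau>) = aff_dim \<tau> + 1" by (simp add: aff_dim_insert)
  moreover have "aff_dim (insert x \<tau>) \<le> aff_dim P" using assms(1,2) by (intro aff_dim_subset) auto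
  ultimately show ?thesis using tau_dim by simp
qed

lemma facet_locally_in_hyperplane:
  assumes "s1 = 0 \<and> s2 \<in> {1, -1} \<or> s1 \<in> {1, -1} \<and> s2 = 0"
  shows "\<exists>a. a \<noteq> 0 \<and> star_cell s1 s2 \<inter> ball p r \<subseteq> {x. a \<bullet> x = a \<bullet> p}"
proof (cases "s1 = 0")
  case True
  have "star_cell s1 s2 \<inter> ball p r \<subseteq> {x. za_normal \<bullet> x = za_normal \<bullet> p}"
  proof
    fix x assume x: "x \<in> star_cell s1 s2 \<inter> ball p r"
    then have "za x = 0" using star_cell_near_p True by auto
    then show "x \<in> {x. za_normal \<bullet> x = za_normal \<bullet> p}"
      using za_near_p x by (simp add: inner_diff_right)
  qed
  then show ?thesis using za_normal_nonzero by blast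
next
  case False
  then have u: "s1 \<in> {1, -1}" and "s2 = 0" using assms by auto
  have "star_cell s1 s2 \<inter> ball p r \<subseteq> {x. zb_normal s1 \<bullet> x = zb_normal s1 \<bullet> p}"
  proof
    fix x assume x: "x \<in> star_cell s1 s2 \<inter> ball p r"
    then have "sgn_cond s1 (za x)" "zb x = 0" using star_cell_near_p \<open>s2 = 0\<close> by auto
    then have "zb_normal s1 \<bullet> (x - p) = 0"
      using zb_near_p[OF u] x sgn_cond_unit_iff[OF u] by auto
    then show "x \<in> {x. zb_normal s1 \<bullet> x = zb_normal s1 \<bullet> p}" by (simp add: inner_diff_right)
  qed
  then show ?thesis using zb_normal_nonzero[OF u] by blast
qed

lemma aff_dim_facet:
  assumes "s1 = 0 \<and> s2 \<in> {1, -1} \<or> s1 \<in> {1, -1} \<and> s2 = 0"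
  shows "aff_dim (star_cell s1 s2) = int CARD('n) - 1"
proof (rule antisym)
  obtain x where x: "x \<in> ball p r" "sgn (za x) = of_int s1" "sgn (zb x) = of_int s2"
    using exists_near_p_with_signs[of s1 s2] assms by auto
  then have "x \<in> star_cell s1 s2" using star_cell_near_p sgn_cond_of_sgn by blast
  moreover have "za x \<noteq> 0 \<or> zb x \<noteq> 0" using x(2,3) assms by auto
  ultimately show "int CARD('n) - 1 \<le> aff_dim (star_cell s1 s2)"
    using aff_dim_ge_if_off_tau[OF tau_subset_star_cell _ x(1)] by blast
next
  show "aff_dim (star_cell s1 s2) \<le> int CARD('n) - 1"
    using facet_locally_in_hyperplane[OF assms]
      aff_dim_le_if_locally_in_hyperplane[OF convex_star_cell p_in_star_cell r_pos] by fastforce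
qed

lemma canonical_through_p_is_star_cell:
  assumes "P \<in> canonical N" "p \<in> P"
  shows "\<exists>s1\<in>{-1, 0, 1}. \<exists>s2\<in>{-1, 0, 1}. P = star_cell s1 s2"
proof -
  obtain s where s: "P = sign_cell N (depth N) s" using assms(1) unfolding canonical_eq_sign_cells by blast
  define s1 s2 where "s1 = sgn (s (la, ja))" and "s2 = sgn (s (lb, jb))"
  have near: "x \<in> P \<longleftrightarrow> x \<in> star_cell s1 s2" if "x \<in> ball p r" for x
    using sign_cell_near_p[OF assms(2)[unfolded s] that] star_cell_near_p[OF that]
    unfolding s s1_def s2_def by simp
  have "P \<subseteq> star_cell s1 s2"
    using sign_cell_subset_if_locally_subset[OF assms(2)[unfolded s] r_pos] near
    unfolding s star_cell_def by blast
  moreover have "star_cell s1 s2 \<subseteq> P"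
    using sign_cell_subset_if_locally_subset[OF p_in_star_cell[unfolded star_cell_def] r_pos] near
    unfolding s star_cell_def by blast
  moreover have "s1 \<in> {-1, 0, 1}" "s2 \<in> {-1, 0, 1}"
    unfolding s1_def s2_def by (auto simp: sgn_if)
  ultimately show ?thesis by blast
qed

definition ridge_facets :: "(real^'n) set set" where
  "ridge_facets = {star_cell 0 1, star_cell 0 (-1), star_cell 1 0, star_cell (-1) 0}"

lemma facets_through_tau:
  "{P \<in> canonical N. aff_dim P = int CARD('n) - 1 \<and> \<tau> \<subseteq> P} = ridge_facets"
proof (intro set_eqI iffI)
  fix P assume P: "P \<in> {P \<in> canonical N. aff_dim P = int CARD('n) - 1 \<and> \<tau> \<subseteq> P}"
  then obtain s1 s2 where s: "s1 \<in> {-1, 0, 1}" "s2 \<in> {-1, 0, 1}" "P = star_cell s1 s2"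
    using canonical_through_p_is_star_cell p_in_tau by blast
  have "\<not> (s1 \<in> {1, -1} \<and> s2 \<in> {1, -1})" using aff_dim_chamber P s(3) by fastforce
  moreover have "\<not> (s1 = 0 \<and> s2 = 0)" using star_cell_0_0 tau_dim P s(3) by fastforce
  ultimately show "P \<in> ridge_facets" using s unfolding ridge_facets_def by auto
next
  fix P assume "P \<in> ridge_facets"
  then obtain s1 s2 where "P = star_cell s1 s2" "s1 = 0 \<and> s2 \<in> {1, -1} \<or> s1 \<in> {1, -1} \<and> s2 = 0"
    unfolding ridge_facets_def by auto
  then show "P \<in> {P \<in> canonical N. aff_dim P = int CARD('n) - 1 \<and> \<tau> \<subseteq> P}"
    using star_cell_canonical aff_dim_facet tau_subset_star_cell by simp
qed

lemma card_ridge_facets: "card ridge_facets = 4"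
proof -
  have ne: "star_cell s1 s2 \<noteq> star_cell s1' s2'"
    if "s1 \<in> {-1, 0, 1}" "s2 \<in> {-1, 0, 1}" "s1' \<in> {-1, 0, 1}" "s2' \<in> {-1, 0, 1}" "(s1, s2) \<noteq> (s1', s2')"
    for s1 s2 s1' s2'
    using star_cell_inj[OF that(1-4)] that(5) by blast
  show ?thesis
    unfolding ridge_facets_def
    using ne[of 0 1 0 "-1"] ne[of 0 1 1 0] ne[of 0 1 "-1" 0] ne[of 0 "-1" 1 0] ne[of 0 "-1" "-1" 0]
      ne[of 1 0 "-1" 0]
    by simp
qed

lemma net_const_on_chamber_at_regular_facet_la:
  assumes cf: "cancellation_free N" and u: "u \<in> {1, -1}" and v: "v \<in> {1, -1}"
    and regular: "\<not> star_cell 0 u \<subseteq> {x. breakpoint N x}"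
  shows "net_const_on N (star_cell v u)"
proof -
  have "net_const_on N (star_cell 1 u \<union> star_cell (-1) u)"
  proof (rule net_const_on_cells_at_regular_facet[OF cf star_cell_canonical _ star_cell_canonical])
    show "aff_dim (star_cell 1 u) = int CARD('n)" "aff_dim (star_cell (-1) u) = int CARD('n)"
      using aff_dim_chamber u by auto
    show "star_cell 1 u \<noteq> star_cell (-1) u"
      using star_cell_inj[of 1 u "-1" u] u by auto
    show "star_cell 1 u \<inter> star_cell (-1) u \<in> canonical N"
      unfolding star_cell_Int_la by (rule star_cell_canonical)
    show "aff_dim (star_cell 1 u \<inter> star_cell (-1) u) = int CARD('n) - 1"
      unfolding star_cell_Int_la using aff_dim_facet u by simp
    show "\<not> star_cell 1 u \<inter> star_cell (-1) u \<subseteq> {x. breakpoint N x}"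
      unfolding star_cell_Int_la by (rule regular)
  qed
  then show ?thesis using net_const_on_subset v by auto
qed

lemma net_const_on_chamber_at_regular_facet_lb:
  assumes cf: "cancellation_free N" and u: "u \<in> {1, -1}" and v: "v \<in> {1, -1}"
    and regular: "\<not> star_cell u 0 \<subseteq> {x. breakpoint N x}"
  shows "net_const_on N (star_cell u v)"
proof -
  have "net_const_on N (star_cell u 1 \<union> star_cell u (-1))"
  proof (rule net_const_on_cells_at_regular_facet[OF cf star_cell_canonical _ star_cell_canonical])
    show "aff_dim (star_cell u 1) = int CARD('n)" "aff_dim (star_cell u (-1)) = int CARD('n)"
      using aff_dim_chamber u by auto
    show "star_cell u 1 \<noteq> star_cell u (-1)"
      using star_cell_inj[of u 1 u "-1"] u by auto
    show "star_cell u 1 \<inter> star_cell u (-1) \<in> canonical N"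
      unfolding star_cell_Int_lb by (rule star_cell_canonical)
    show "aff_dim (star_cell u 1 \<inter> star_cell u (-1)) = int CARD('n) - 1"
      unfolding star_cell_Int_lb using aff_dim_facet u by simp
    show "\<not> star_cell u 1 \<inter> star_cell u (-1) \<subseteq> {x. breakpoint N x}"
      unfolding star_cell_Int_lb by (rule regular)
  qed
  then show ?thesis using net_const_on_subset v by auto
qed

lemma ray_into_star_cell_la_0:
  assumes c: "c1 \<in> {1, -1}" "c2 \<in> {1, -1}"
    and v: "za_normal \<bullet> v = 0" "0 \<le> of_int c2 * (zb_normal c1 \<bullet> v)"
  shows "\<exists>\<epsilon>>0. p + \<epsilon> *\<^sub>R v \<in> star_cell 0 c2"
proof -
  obtain \<epsilon> where \<epsilon>: "0 < \<epsilon>" "p + \<epsilon> *\<^sub>R v \<in> ball p r"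
    using open_contains_ray_point[OF open_ball p_in_ball] by blast
  have za: "za (p + \<epsilon> *\<^sub>R v) = 0" using za_near_p[OF \<epsilon>(2)] v(1) by simp
  then have "zb (p + \<epsilon> *\<^sub>R v) = \<epsilon> * (zb_normal c1 \<bullet> v)" using zb_near_p[OF c(1) \<epsilon>(2)] by simp
  then have "0 \<le> of_int c2 * zb (p + \<epsilon> *\<^sub>R v)" using v(2) \<epsilon>(1) by (simp add: mult.left_commute)
  then show ?thesis
    using star_cell_near_p[OF \<epsilon>(2)] za sgn_cond_unit_iff[OF c(2)] \<epsilon>(1) by auto
qed

lemma ray_into_star_cell_lb_0:
  assumes c: "c1 \<in> {1, -1}"
    and v: "0 \<le> of_int c1 * (za_normal \<bullet> v)" "zb_normal c1 \<bullet> v = 0"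
  shows "\<exists>\<epsilon>>0. p + \<epsilon> *\<^sub>R v \<in> star_cell c1 0"
proof -
  obtain \<epsilon> where \<epsilon>: "0 < \<epsilon>" "p + \<epsilon> *\<^sub>R v \<in> ball p r"
    using open_contains_ray_point[OF open_ball p_in_ball] by blast
  have "za (p + \<epsilon> *\<^sub>R v) = \<epsilon> * (za_normal \<bullet> v)" using za_near_p[OF \<epsilon>(2)] by simp
  then have za: "0 \<le> of_int c1 * za (p + \<epsilon> *\<^sub>R v)" using v(1) \<epsilon>(1) by (simp add: mult.left_commute)
  then have "zb (p + \<epsilon> *\<^sub>R v) = 0" using zb_near_p[OF c(1) \<epsilon>(2)] v(2) by simp
  then show ?thesis
    using star_cell_near_p[OF \<epsilon>(2)] za sgn_cond_unit_iff[OF c(1)] \<epsilon>(1) by auto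
qed

text \<open>The two neighbouring chambers freeze the network on the two facets of the chamber in
  between; as these facets span the whole space near \<open>p\<close>, the affine map on that chamber is
  constant too.\<close>
lemma net_const_on_chamber_between:
  assumes c: "c1 \<in> {1, -1}" "c2 \<in> {1, -1}"
    and const: "net_const_on N (star_cell (-c1) c2)" "net_const_on N (star_cell c1 (-c2))"
  shows "net_const_on N (star_cell c1 c2)"
proof -
  obtain A c where Ac: "\<forall>x\<in>star_cell c1 c2. \<forall>k<nout N. netf N x k = A k \<bullet> x + c k"
    using affine_on_net_canonical[OF star_cell_canonical] unfolding affine_on_net_def by blast
  have A_zero: "A k = 0" if k: "k < nout N" for k
  proof -
    have orth: "A k \<bullet> v = 0"
      if "0 < \<epsilon>" "p + \<epsilon> *\<^sub>R v \<in> star_cell c1 c2" "p + \<epsilon> *\<^sub>R v \<in> D" "net_const_on N D" "p \<in> D" for \<epsilon> v D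
    proof -
      have "netf N (p + \<epsilon> *\<^sub>R v) k = netf N p k" using that(3-5) k unfolding net_const_on_def by blast
      then have "A k \<bullet> (p + \<epsilon> *\<^sub>R v) + c k = A k \<bullet> p + c k"
        using Ac that(2) p_in_star_cell k by metis
      then show ?thesis using that(1) by (simp add: inner_add_right)
    qed
    show ?thesis
    proof (rule linear_form_zero_on_two_half_hyperplanes[OF normals_independent[OF c(1)]])
      show "\<bar>real_of_int c1\<bar> = 1" "\<bar>real_of_int c2\<bar> = 1" using c by auto
    next
      fix v assume "za_normal \<bullet> v = 0" "0 \<le> of_int c2 * (zb_normal c1 \<bullet> v)"
      then obtain \<epsilon> where "0 < \<epsilon>" "p + \<epsilon> *\<^sub>R v \<in> star_cell 0 c2"
        using ray_into_star_cell_la_0[OF c] by blast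
      then show "A k \<bullet> v = 0"
        using orth[OF \<open>0 < \<epsilon>\<close> _ _ const(1) p_in_star_cell] c(1)
          star_cell_la_0_subset[of c1 c2] star_cell_la_0_subset[of "-c1" c2] by auto
    next
      fix v assume "0 \<le> of_int c1 * (za_normal \<bullet> v)" "zb_normal c1 \<bullet> v = 0"
      then obtain \<epsilon> where "0 < \<epsilon>" "p + \<epsilon> *\<^sub>R v \<in> star_cell c1 0"
        using ray_into_star_cell_lb_0[OF c(1)] by blast
      then show "A k \<bullet> v = 0"
        using orth[OF \<open>0 < \<epsilon>\<close> _ _ const(2) p_in_star_cell] c(2)
          star_cell_lb_0_subset[of c2 c1] star_cell_lb_0_subset[of "-c2" c1] by auto
    qed
  qed
  show ?thesis
    unfolding net_const_on_def using Ac A_zero by simp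
qed

lemma some_chamber_not_const:
  assumes "\<tau> \<subseteq> {x. breakpoint N x}"
  shows "\<exists>c1\<in>{1, -1}. \<exists>c2\<in>{1, -1}. \<not> net_const_on N (star_cell c1 c2)"
proof (rule ccontr)
  assume "\<not> ?thesis"
  then have const: "net_const_on N (star_cell c1 c2)" if "c1 \<in> {1, -1}" "c2 \<in> {1, -1}" for c1 c2
    using that by blast
  have "netf N x k = netf N p k" if x: "x \<in> ball p r" and k: "k < nout N" for x k
  proof -
    define c1 :: int where "c1 = (if 0 \<le> za x then 1 else -1)"
    define c2 :: int where "c2 = (if 0 \<le> zb x then 1 else -1)"
    have "x \<in> star_cell c1 c2"
      using star_cell_near_p[OF x] unfolding c1_def c2_def sgn_cond_def by auto
    moreover have "net_const_on N (star_cell c1 c2)"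
      using const unfolding c1_def c2_def by simp
    ultimately show ?thesis
      using p_in_star_cell k unfolding net_const_on_def by blast
  qed
  then have "affine_on_net N (ball p r)"
    unfolding affine_on_net_def by (intro exI[of _ "\<lambda>_. 0"] exI[of _ "\<lambda>k. netf N p k"]) simp
  then have "\<not> breakpoint N p"
    unfolding breakpoint_def using p_in_ball by blast
  then show False using assms p_in_tau by blast
qed

lemma all_but_one_ridge_facet_breakpoint:
  assumes cf: "cancellation_free N" and "\<tau> \<subseteq> {x. breakpoint N x}"
  shows "\<exists>F0. ridge_facets - {F0} \<subseteq> {F. F \<subseteq> {x. breakpoint N x}}"
proof -
  obtain c1 c2 where c: "c1 \<in> {1, -1}" "c2 \<in> {1, -1}" and nc: "\<not> net_const_on N (star_cell c1 c2)"
    using some_chamber_not_const[OF assms(2)] by blast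
  have c': "-c1 \<in> {1, -1}" "-c2 \<in> {1, -1}" using c by auto
  have facets: "ridge_facets = {star_cell 0 c2, star_cell 0 (-c2), star_cell c1 0, star_cell (-c1) 0}"
    using c unfolding ridge_facets_def by auto
  note regular_la = net_const_on_chamber_at_regular_facet_la[OF cf]
  note regular_lb = net_const_on_chamber_at_regular_facet_lb[OF cf]
  have bp: "star_cell 0 c2 \<subseteq> {x. breakpoint N x}" "star_cell c1 0 \<subseteq> {x. breakpoint N x}"
    using regular_la[OF c(2) c(1)] regular_lb[OF c] nc by blast+
  have "\<not> net_const_on N (star_cell (-c1) c2) \<or> \<not> net_const_on N (star_cell c1 (-c2))"
    using net_const_on_chamber_between[OF c] nc by blast
  then show ?thesis
  proof
    assume "\<not> net_const_on N (star_cell (-c1) c2)"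
    then have "star_cell (-c1) 0 \<subseteq> {x. breakpoint N x}" using regular_lb[OF c'(1) c(2)] by blast
    then show ?thesis
      using bp facets by (intro exI[of _ "star_cell 0 (-c2)"]) auto
  next
    assume "\<not> net_const_on N (star_cell c1 (-c2))"
    then have "star_cell 0 (-c2) \<subseteq> {x. breakpoint N x}" using regular_la[OF c'(2) c(1)] by blast
    then show ?thesis
      using bp facets by (intro exI[of _ "star_cell (-c1) 0"]) auto
  qed
qed

lemma card_breakpoint_ridge_facets:
  assumes "cancellation_free N" "\<tau> \<subseteq> {x. breakpoint N x}"
  shows "card {F \<in> ridge_facets. F \<subseteq> {x. breakpoint N x}} \<in> {3, 4}"
proof -
  let ?B = "{F \<in> ridge_facets. F \<subseteq> {x. breakpoint N x}}"
  obtain F0 where F0: "ridge_facets - {F0} \<subseteq> ?B"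
    using all_but_one_ridge_facet_breakpoint[OF assms] by blast
  have fin: "finite ridge_facets" unfolding ridge_facets_def by simp
  have "3 \<le> card (ridge_facets - {F0})"
    using card_ridge_facets by (simp add: card_Diff_singleton_if)
  also have "\<dots> \<le> card ?B" using F0 fin by (intro card_mono) auto
  finally have "3 \<le> card ?B" .
  moreover have "card ?B \<le> card ridge_facets" using fin by (intro card_mono) auto
  ultimately show ?thesis using card_ridge_facets by auto
qed

lemma breakpoint_facets_through_tau:
  "{P \<in> breakpoint_complex N. aff_dim P = int CARD('n) - 1 \<and> \<tau> \<subseteq> P}
    = {F \<in> ridge_facets. F \<subseteq> {x. breakpoint N x}}"
  using facets_through_tau unfolding breakpoint_complex_def by blast

end

lemma ridge_bending_neurons:
  fixes \<tau> :: "(real^'n::finite) set"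
  assumes "supertransversal N" "\<tau> \<in> canonical N" "aff_dim \<tau> = int CARD('n) - 2"
  obtains la ja lb jb where "la \<le> lb" "(la, ja) \<noteq> (lb, jb)"
    "{(l, j). l \<in> {1..depth N} \<and> j < width N l \<and> \<tau> \<subseteq> bent N l j} = {(la, ja), (lb, jb)}"
proof -
  let ?S = "{(l, j). l \<in> {1..depth N} \<and> j < width N l \<and> \<tau> \<subseteq> bent N l j}"
  have "card ?S = 2"
    using assms unfolding supertransversal_def by auto
  then obtain x y where xy: "?S = {x, y}" "x \<noteq> y" unfolding card_2_iff by blast
  show ?thesis
  proof (cases "fst x \<le> fst y")
    case True
    then show ?thesis using that[of "fst x" "fst y" "snd x" "snd y"] xy by auto
  next
    case False
    then show ?thesis using that[of "fst y" "fst x" "snd y" "snd x"] xy by auto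
  qed
qed

lemma ridge_neighbourhood_exists:
  fixes \<tau> :: "(real^'n::finite) set"
  assumes "supertransversal N" "\<tau> \<in> canonical N" "aff_dim \<tau> = int CARD('n) - 2"
  obtains t p r la ja lb jb where "ridge_neighbourhood N \<tau> t p r la ja lb jb"
proof -
  obtain t where t: "\<tau> = sign_cell N (depth N) t" and "\<tau> \<noteq> {}"
    using assms(2) unfolding canonical_eq_sign_cells by blast
  then obtain p where p: "p \<in> rel_interior \<tau>"
    using convex_canonical[OF assms(2)] rel_interior_eq_empty by blast
  obtain r where r: "0 < r" "\<forall>x\<in>ball p r. \<forall>l\<in>{1..depth N}. \<forall>j<width N l.
      pre N l j p \<noteq> 0 \<longrightarrow> sgn (pre N l j x) = sgn (pre N l j p)"
    using exists_sgn_stable_ball by blast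
  obtain la ja lb jb where neurons: "la \<le> lb" "(la, ja) \<noteq> (lb, jb)"
    "{(l, j). l \<in> {1..depth N} \<and> j < width N l \<and> \<tau> \<subseteq> bent N l j} = {(la, ja), (lb, jb)}"
    using ridge_bending_neurons[OF assms] .
  have "ridge_neighbourhood N \<tau> t p r la ja lb jb"
  proof
    show "\<And>x l j. x \<in> ball p r \<Longrightarrow> l \<in> {1..depth N} \<Longrightarrow> j < width N l \<Longrightarrow>
        pre N l j p \<noteq> 0 \<Longrightarrow> sgn (pre N l j x) = sgn (pre N l j p)"
      using r(2) by blast
  qed (fact t assms(3) p r(1) neurons)+
  then show ?thesis by (rule that)
qed

theorem mainTheorem15:
  fixes N :: "'n::finite relu_net" and \<tau> :: "(real^'n) set"
  assumes "valid_net N"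
    and "supertransversal N"
    and "cancellation_free N"
    and "\<tau> \<in> breakpoint_complex N"
    and "aff_dim \<tau> = int CARD('n) - 2"
  shows "card {P \<in> breakpoint_complex N. aff_dim P = int CARD('n) - 1 \<and> \<tau> \<subseteq> P} \<in> {3, 4}"
proof -
  have \<tau>: "\<tau> \<in> canonical N" "\<tau> \<subseteq> {x. breakpoint N x}"
    using assms(4) unfolding breakpoint_complex_def by auto
  obtain t p r la ja lb jb where "ridge_neighbourhood N \<tau> t p r la ja lb jb"
    using ridge_neighbourhood_exists[OF assms(2) \<tau>(1) assms(5)] .
  then interpret ridge_neighbourhood N \<tau> t p r la ja lb jb .
  show ?thesis
    using card_breakpoint_ridge_facets[OF assms(3) \<tau>(2)] breakpoint_facets_through_tau by simp
qed

end
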